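(* Let $a_0,a_1,a_2$ be elements of a field $K$ and let $(F(n,k))_{n\ge 0,\,k\in\mathbb{Z}}$ be defined by $F(0,0)=1$, $F(n,k)=0$ whenever $k<0$ or $k>n$, and \[ F(n,k)=F(n-1,k-1)+(a_2n+a_1k+a_0)\,F(n-1,k)\qquad(n\ge1). \] Then for every $n\ge 0$, in the polynomial ring $K[x]$, \[ \prod_{i=0}^{n-1}(x+ia_2)=\sum_{k=0}^{n}F(n,k)\prod_{i=0}^{k-1}(x-a_0-a_2-ia_1). \]
   Context: Empty products equal $1$. *)

theory Defs
  imports "HOL-Computational_Algebra.Polynomial"
begin

fun Ftri :: "'a::field \<Rightarrow> 'a \<Rightarrow> 'a \<Rightarrow> nat \<Rightarrow> int \<Rightarrow> 'a" where
  "Ftri a0 a1 a2 0 k = (if k = 0 then 1 else 0)"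
| "Ftri a0 a1 a2 (Suc m) k =
     (if k < 0 \<or> k > int (Suc m) then 0
      else Ftri a0 a1 a2 m (k - 1)
           + (a2 * of_nat (Suc m) + a1 * of_int k + a0) * Ftri a0 a1 a2 m k)"

end

theory Submission
  imports Defs
begin

text \<open>Write \<open>P k\<close> for the product \<open>\<Prod>i<k. (x - a0 - a2 - i a1)\<close>. Multiplying \<open>P k\<close> by
  \<open>x + n a2\<close> gives \<open>P (k + 1) + (a2 (n + 1) + a1 k + a0) P k\<close>, since the linear factor
  differs from the next factor of \<open>P (k + 1)\<close> by exactly that constant. Hence multiplying the
  expansion for \<open>n\<close> by \<open>x + n a2\<close> produces coefficients obeying the defining recurrence of
  \<open>F (n + 1, k)\<close>, and the theorem follows by induction on \<open>n\<close>.\<close>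

lemma Ftri_eq_0: "k < 0 \<or> k > int n \<Longrightarrow> Ftri a0 a1 a2 n k = 0"
  by (induction n) auto

lemma linear_times_shifted_prod:
  fixes b d e :: "'a::comm_ring_1"
  shows "[:e, 1:] * (\<Prod>i<k. [:b + of_nat i * d, 1:]) =
         (\<Prod>i<Suc k. [:b + of_nat i * d, 1:]) +
         smult (e - b - of_nat k * d) (\<Prod>i<k. [:b + of_nat i * d, 1:])"
proof -
  have "[:e, 1:] = [:b + of_nat k * d, 1:] + [:e - b - of_nat k * d:]"
    by simp
  then show ?thesis
    by (simp add: distrib_right mult.commute flip: smult_add_left)
qed

lemma times_sum_smult_step:
  fixes q :: "'a::comm_ring_1 poly" and P :: "nat \<Rightarrow> 'a poly" and g :: "int \<Rightarrow> 'a"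
  assumes step: "\<And>k. q * P k = P (Suc k) + smult (c k) (P k)"
    and g_below: "g (-1) = 0" and g_above: "g (int (Suc n)) = 0"
  shows "q * (\<Sum>k=0..n. smult (g (int k)) (P k)) =
         (\<Sum>k=0..Suc n. smult (g (int k - 1) + c k * g (int k)) (P k))"
proof -
  have "q * (\<Sum>k=0..n. smult (g (int k)) (P k)) =
        (\<Sum>k=0..n. smult (g (int k)) (P (Suc k))) + (\<Sum>k=0..n. smult (c k * g (int k)) (P k))"
    by (simp add: sum_distrib_left step smult_add_right sum.distrib mult.commute)
  also have "(\<Sum>k=0..n. smult (g (int k)) (P (Suc k))) =
             (\<Sum>k=0..Suc n. smult (g (int k - 1)) (P k))"
    by (subst sum.atLeast0_atMost_Suc_shift) (simp add: g_below)
  also have "(\<Sum>k=0..n. smult (c k * g (int k)) (P k)) =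
             (\<Sum>k=0..Suc n. smult (c k * g (int k)) (P k))"
    using g_above by simp
  finally show ?thesis
    by (simp add: sum.distrib smult_add_left)
qed

theorem mainTheorem6:
  fixes a0 a1 a2 :: "'a::field" and n :: nat
  shows "(\<Prod>i<n. [:of_nat i * a2, 1:]) =
         (\<Sum>k=0..n. smult (Ftri a0 a1 a2 n (int k))
             (\<Prod>i<k. [:- a0 - a2 - of_nat i * a1, 1:]))"
proof (induction n)
  case 0
  then show ?case by simp
next
  case (Suc n)
  define P where "P k = (\<Prod>i<k. [:- a0 - a2 + of_nat i * (- a1), 1:])" for k
  define c where "c k = a2 * of_nat (Suc n) + a1 * of_nat k + a0" for k
  have step: "[:of_nat n * a2, 1:] * P k = P (Suc k) + smult (c k) (P k)" for k
    unfolding P_def c_def linear_times_shifted_prod by (simp add: algebra_simps)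
  have "(\<Prod>i<Suc n. [:of_nat i * a2, 1:]) =
        [:of_nat n * a2, 1:] * (\<Sum>k=0..n. smult (Ftri a0 a1 a2 n (int k)) (P k))"
    using Suc by (simp add: P_def mult.commute)
  also have "\<dots> = (\<Sum>k=0..Suc n. smult (Ftri a0 a1 a2 (Suc n) (int k)) (P k))"
    by (subst times_sum_smult_step[where P = P and c = c, OF step]) (auto simp: Ftri_eq_0 c_def intro!: sum.cong)
  finally show ?case by (simp add: P_def)
qed

end
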